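(* There is an absolute constant $C>0$ (independent of $K$, $V_T$, $T$) such that for every $T\geq 1$, every $K\geq 2$, every $V_T\in[K^{-1},K^{-1}T]$, and every admissible policy $\pi\in\mathcal{P}$, when all rewards are Bernoulli, \[ \mathcal{R}^{\pi}(\mathcal{V},T)\;\geq\; C\,(K V_T)^{1/3}\,T^{2/3}. \]
   Context: Multi-armed bandit with arms $\mathcal{K}=\{1,\dots,K\}$ and decision epochs $t\in\{1,\dots,T\}$. Pulling arm $k$ at epoch $t$ yields a reward $X_t^k\in[0,1]$ with mean $\mu_t^k=\mathbb{E}[X_t^k]$; here $X_t^k$ is Bernoulli with parameter $\mu_t^k$, rewards independent across epochs. Write $\mu=(\mu_t^k)_{k\in\mathcal{K},t\le T}$ and $\mu_t^*=\max_{k}\mu_t^k$. For a variation budget $V_T>0$, the temporal uncertainty set is $\mathcal{V}=\{\mu\in[0,1]^{K\times T}:\ \sum_{t=1}^{T-1}\sup_{k\in\mathcal{K}}|\mu_t^k-\mu_{t+1}^k|\le V_T\}$. An admissible policy $\pi\in\mathcal{P}$: given a random variable $U$ on some probability space (independent of the rewards), measurable maps $\pi_1(U)\in\mathcal{K}$ and $\pi_t(X_{t-1}^\pi,\dots,X_1^\pi,U)\in\mathcal{K}$ for $t\ge2$, where $X_s^\pi$ is the reward observed at epoch $s$ from the pulled arm $\pi_s$ (non-anticipating, possibly randomized). The regret is $\mathcal{R}^{\pi}(\mathcal{V},T)=\sup_{\mu\in\mathcal{V}}\big\{\sum_{t=1}^T\mu_t^*-\mathbb{E}^\pi[\sum_{t=1}^T\mu_t^{\pi_t}]\big\}$,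 the expectation over rewards and the policy's randomization. *)

theory Defs
  imports "HOL-Probability.Probability"
begin

text \<open>Arms are 1..K, epochs are 1..T; mu t k is the mean reward of arm k at epoch t.
  Rewards are Bernoulli, so an observed reward is a bool (True = 1).
  A history is the list of observed rewards in chronological order
  (element s is the reward observed at epoch s+1).\<close>

definition in_variation_set :: "nat \<Rightarrow> nat \<Rightarrow> real \<Rightarrow> (nat \<Rightarrow> nat \<Rightarrow> real) \<Rightarrow> bool" where
  "in_variation_set K T V mu \<longleftrightarrow>
     (\<forall>t\<in>{1..T}. \<forall>k\<in>{1..K}. 0 \<le> mu t k \<and> mu t k \<le> 1) \<and>
     (\<Sum>t=1..T-1. Max ((\<lambda>k. \<bar>mu t k - mu (t+1) k\<bar>) ` {1..K})) \<le> V"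

definition best_mean :: "nat \<Rightarrow> (nat \<Rightarrow> nat \<Rightarrow> real) \<Rightarrow> nat \<Rightarrow> real" where
  "best_mean K mu t = Max ((\<lambda>k. mu t k) ` {1..K})"

definition hist_prob :: "(nat \<Rightarrow> nat \<Rightarrow> real) \<Rightarrow> (bool list \<Rightarrow> nat) \<Rightarrow> bool list \<Rightarrow> real" where
  "hist_prob mu p h =
     (\<Prod>s<length h. if h ! s then mu (s+1) (p (take s h)) else 1 - mu (s+1) (p (take s h)))"

definition det_exp_reward :: "(nat \<Rightarrow> nat \<Rightarrow> real) \<Rightarrow> (bool list \<Rightarrow> nat) \<Rightarrow> nat \<Rightarrow> real" where
  "det_exp_reward mu p T =
     (\<Sum>t<T. \<Sum>h\<in>{h::bool list. length h = t}. hist_prob mu p h * mu (t+1) (p h))"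

text \<open>Admissible randomized policy: U is a random variable with law M on the reals
  (independent of rewards); pol u h is the arm pulled after history h when U = u.\<close>
definition admissible :: "nat \<Rightarrow> real measure \<Rightarrow> (real \<Rightarrow> bool list \<Rightarrow> nat) \<Rightarrow> bool" where
  "admissible K M pol \<longleftrightarrow> prob_space M \<and> sets M = sets borel \<and>
     (\<forall>h. (\<lambda>u. pol u h) \<in> M \<rightarrow>\<^sub>M count_space UNIV) \<and>
     (\<forall>u h. pol u h \<in> {1..K})"

definition exp_reward :: "real measure \<Rightarrow> (real \<Rightarrow> bool list \<Rightarrow> nat) \<Rightarrow> (nat \<Rightarrow> nat \<Rightarrow> real) \<Rightarrow> nat \<Rightarrow> real" where
  "exp_reward M pol mu T = (\<integral>u. det_exp_reward mu (pol u) T \<partial>M)"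

definition regret :: "nat \<Rightarrow> nat \<Rightarrow> real \<Rightarrow> real measure \<Rightarrow> (real \<Rightarrow> bool list \<Rightarrow> nat) \<Rightarrow> real" where
  "regret K T V M pol =
     (SUP mu\<in>{mu. in_variation_set K T V mu}.
        (\<Sum>t=1..T. best_mean K mu t) - exp_reward M pol mu T)"

end

theory Submission
  imports Defs "HOL-Library.FuncSet"
begin

(* Split the horizon
   into blocks of length L.  A hard instance is given by a choice a of one "good"
   arm per block: the good arm has mean 1/2 + e and all other arms mean 1/2, so the
   instance changes only at block boundaries and has total variation at most e T / L.
   Within one block a policy can barely tell the K choices of the good arm apart:
   summed over the good arm k, the KL divergences between the law of the history
   under "good arm k" and under the reference "no good arm" are at most 8 e^2 L,
   so by a Pinsker-type inequality the policy pulls the good arm with average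
   probability at most 1/8 + 1/K + 64 e^2 L / K, which is at most 3/4 when
   512 e^2 L <= K.  Hence a deterministic policy suffers
   expected regret at least e T / 4 averaged over all hard instances, and so does
   a randomized one (average over the randomization).  Choosing
   e ~ (K V / T)^(1/3) and L ~ K / e^2 balances the two constraints. *)

section \<open>The law of the history of a deterministic policy\<close>

lemma finite_histories: "finite {h::bool list. length h = t}"
  using finite_lists_length_eq[of "UNIV::bool set" t] by simp

lemma histories_0: "{h::bool list. length h = 0} = {[]}"
  by auto

lemma sum_histories_Suc:
  "(\<Sum>h\<in>{h::bool list. length h = Suc t}. f h) =
   (\<Sum>h\<in>{h. length h = t}. f (h @ [True]) + f (h @ [False]))"
proof -
  let ?snoc = "\<lambda>(h, b). h @ [b :: bool]"
  have img: "{h::bool list. length h = Suc t} = ?snoc ` ({h. length h = t} \<times> UNIV)"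
  proof (rule set_eqI, rule iffI)
    fix x :: "bool list" assume "x \<in> {h. length h = Suc t}"
    then have "x = butlast x @ [last x]" "length (butlast x) = t"
      by (auto simp: snoc_eq_iff_butlast) (metis append_butlast_last_id list.size(3) nat.distinct(1))
    then show "x \<in> ?snoc ` ({h. length h = t} \<times> UNIV)"
      by (intro image_eqI[of _ _ "(butlast x, last x)"]) auto
  qed auto
  have inj: "inj_on ?snoc ({h::bool list. length h = t} \<times> UNIV)"
    by (auto simp: inj_on_def)
  have "(\<Sum>h\<in>{h::bool list. length h = Suc t}. f h) = (\<Sum>h\<in>{h::bool list. length h = t}. \<Sum>b\<in>UNIV. f (h @ [b]))"
    unfolding img sum.reindex[OF inj] by (simp add: sum.cartesian_product case_prod_unfold)
  then show ?thesis
    by (simp add: UNIV_bool add.commute)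
qed

lemma hist_prob_Nil [simp]: "hist_prob mu p [] = 1"
  by (simp add: hist_prob_def)

lemma hist_prob_snoc:
  "hist_prob mu p (h @ [b]) =
   hist_prob mu p h * (if b then mu (length h + 1) (p h) else 1 - mu (length h + 1) (p h))"
proof -
  have "hist_prob mu p h = (\<Prod>s<length h. if (h @ [b]) ! s then mu (s+1) (p (take s (h @ [b])))
                                           else 1 - mu (s+1) (p (take s (h @ [b]))))"
    unfolding hist_prob_def by (intro prod.cong) (auto simp: nth_append)
  then show ?thesis
    by (simp add: hist_prob_def prod.lessThan_Suc)
qed

lemma hist_prob_sum_one: "(\<Sum>h\<in>{h. length h = t}. hist_prob mu p h) = 1"
proof (induction t)
  case 0
  then show ?case by (simp add: histories_0)
next
  case (Suc t)
  then show ?case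
    by (simp add: sum_histories_Suc hist_prob_snoc algebra_simps)
qed

text \<open>Means strictly between 0 and 1 make every history have positive probability,
  which is what the KL divergences below need.\<close>

definition interior_means :: "(nat \<Rightarrow> nat \<Rightarrow> real) \<Rightarrow> bool" where
  "interior_means mu \<longleftrightarrow> (\<forall>t k. 0 < mu t k \<and> mu t k < 1)"

lemma hist_prob_pos: "interior_means mu \<Longrightarrow> 0 < hist_prob mu p h"
  unfolding hist_prob_def interior_means_def by (intro prod_pos) (auto simp: less_diff_eq)

section \<open>KL divergence between history laws: the chain rule\<close>

definition kl :: "real \<Rightarrow> real \<Rightarrow> real" where
  "kl x y = x * ln (x / y) + (1 - x) * ln ((1 - x) / (1 - y))"

definition hist_kl :: "(nat \<Rightarrow> nat \<Rightarrow> real) \<Rightarrow> (nat \<Rightarrow> nat \<Rightarrow> real) \<Rightarrow> (bool list \<Rightarrow> nat) \<Rightarrow> nat \<Rightarrow> real" where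
  "hist_kl nu mu p t = (\<Sum>h\<in>{h. length h = t}. hist_prob nu p h * ln (hist_prob nu p h / hist_prob mu p h))"

lemma kl_same [simp]: "kl x x = 0"
  by (cases "x = 0"; cases "x = 1") (auto simp: kl_def)

text \<open>One step of the chain rule: the contribution of the two extensions of a history.\<close>

lemma kl_extension:
  assumes "P > 0" "Q > 0" "0 < x" "x < 1" "0 < y" "y < 1"
  shows "P * x * ln (P * x / (Q * y)) + P * (1 - x) * ln (P * (1 - x) / (Q * (1 - y)))
       = P * ln (P / Q) + P * kl x y"
proof -
  have "ln (P * x / (Q * y)) = ln (P / Q) + ln (x / y)"
    using assms ln_mult_pos[of "P / Q" "x / y"] by simp
  moreover have "ln (P * (1 - x) / (Q * (1 - y))) = ln (P / Q) + ln ((1 - x) / (1 - y))"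
    using assms ln_mult_pos[of "P / Q" "(1 - x) / (1 - y)"] by simp
  ultimately show ?thesis
    unfolding kl_def by (simp add: algebra_simps)
qed

lemma hist_kl_Suc:
  assumes "interior_means nu" "interior_means mu"
  shows "hist_kl nu mu p (Suc t) = hist_kl nu mu p t +
           (\<Sum>h\<in>{h. length h = t}. hist_prob nu p h * kl (nu (t+1) (p h)) (mu (t+1) (p h)))"
proof -
  have "hist_kl nu mu p (Suc t) = (\<Sum>h\<in>{h. length h = t}.
          hist_prob nu p h * ln (hist_prob nu p h / hist_prob mu p h)
          + hist_prob nu p h * kl (nu (t+1) (p h)) (mu (t+1) (p h)))"
    unfolding hist_kl_def sum_histories_Suc
  proof (intro sum.cong refl)
    fix h :: "bool list" assume "h \<in> {h. length h = t}"
    then have len: "length h = t" by simp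
    show "hist_prob nu p (h @ [True]) * ln (hist_prob nu p (h @ [True]) / hist_prob mu p (h @ [True])) +
          hist_prob nu p (h @ [False]) * ln (hist_prob nu p (h @ [False]) / hist_prob mu p (h @ [False])) =
          hist_prob nu p h * ln (hist_prob nu p h / hist_prob mu p h) + hist_prob nu p h * kl (nu (t + 1) (p h)) (mu (t + 1) (p h))"
      unfolding hist_prob_snoc if_True if_False len mult.assoc[symmetric]
      using assms unfolding interior_means_def
      by (intro kl_extension) (simp_all add: hist_prob_pos[OF assms(1)] hist_prob_pos[OF assms(2)])
  qed
  then show ?thesis
    by (simp add: sum.distrib hist_kl_def)
qed

lemma hist_kl_chain_rule:
  assumes "interior_means nu" "interior_means mu"
  shows "hist_kl nu mu p t =
           (\<Sum>s<t. \<Sum>h\<in>{h. length h = s}. hist_prob nu p h * kl (nu (s+1) (p h)) (mu (s+1) (p h)))"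
proof (induction t)
  case 0
  then show ?case by (simp add: hist_kl_def histories_0)
next
  case (Suc t)
  then show ?case using hist_kl_Suc[OF assms] by simp
qed

lemma kl_half_le:
  fixes e :: real
  assumes "0 < e" "e \<le> 1/4"
  shows "kl (1/2) (1/2 + e) \<le> 8 * e^2"
proof -
  have small: "1 - 4 * e^2 \<ge> 1/2"
    using mult_mono[of e "1/4" e "1/4"] assms by (simp add: power2_eq_square)
  have "kl (1/2) (1/2 + e) = 1/2 * ln (1 / (1 + 2*e)) + 1/2 * ln (1 / (1 - 2*e))"
    unfolding kl_def by (simp add: field_simps)
  also have "\<dots> \<le> 1/2 * (1 / (1 + 2*e) - 1) + 1/2 * (1 / (1 - 2*e) - 1)"
    using assms by (intro add_mono mult_left_mono ln_le_minus_one) auto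
  also have "\<dots> = 4 * e^2 / (1 - 4 * e^2)"
    using assms by (simp add: field_simps power2_eq_square)
  also have "\<dots> \<le> 8 * e^2"
  proof -
    have "4 * e^2 \<le> 8 * e^2 * (1 - 4 * e^2)"
      using mult_left_mono[OF small, of "8 * e^2"] by simp
    then show ?thesis
      using small by (simp add: pos_divide_le_eq)
  qed
  finally show ?thesis .
qed

section \<open>A Pinsker-type inequality\<close>

text \<open>Pointwise form for a = sqrt p, b = sqrt q: uses ln z \<le> z - 1 and
  32 |a - b|(a + b) \<le> 256 (a - b)^2 + (a + b)^2.\<close>

lemma pinsker_pointwise:
  fixes a b :: real
  assumes "a > 0" "b > 0"
  shows "16 * \<bar>a^2 - b^2\<bar> \<le> 128 * (a^2 * ln (a^2 / b^2)) + 128 * b^2 - 128 * a^2 + a^2 + b^2"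
proof -
  have "ln (b / a) \<le> b / a - 1"
    using assms by (intro ln_le_minus_one) simp
  moreover have "a^2 * ln (a^2 / b^2) = 2 * a^2 * (- ln (b / a))"
    using assms by (simp add: power_divide[symmetric] ln_realpow ln_div)
  moreover have "2 * a^2 * (1 - b / a) \<le> 2 * a^2 * (- ln (b / a))"
    using calculation(1) by (intro mult_left_mono) simp_all
  ultimately have "a^2 * ln (a^2 / b^2) \<ge> 2 * a^2 * (1 - b / a)"
    by simp
  also have "2 * a^2 * (1 - b / a) = 2 * a^2 - 2 * (a * b)"
    using assms by (simp add: power2_eq_square field_simps)
  finally have log_part: "a^2 * ln (a^2 / b^2) \<ge> 2 * a^2 - 2 * (a * b)" .
  have "a^2 - b^2 = (a - b) * (a + b)"
    by (simp add: power2_eq_square algebra_simps)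
  then have "\<bar>a^2 - b^2\<bar> = \<bar>a - b\<bar> * (a + b)"
    using assms by (simp add: abs_mult)
  moreover have "0 \<le> (16 * \<bar>a - b\<bar> - (a + b))^2"
    by simp
  moreover have "(16 * \<bar>a - b\<bar> - (a + b))^2 = 256 * (a - b)^2 - 32 * (\<bar>a - b\<bar> * (a + b)) + (a + b)^2"
    using power2_diff[of "16 * \<bar>a - b\<bar>" "a + b"] by (simp add: power2_abs power_mult_distrib)
  ultimately have "32 * \<bar>a^2 - b^2\<bar> \<le> 256 * (a - b)^2 + (a + b)^2"
    by (smt (verit))
  moreover have "(a + b)^2 = a^2 + b^2 + 2 * (a * b)" "(a - b)^2 = a^2 + b^2 - 2 * (a * b)"
    by (simp_all add: power2_sum power2_diff)
  moreover have "0 \<le> (a - b)^2"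
    by simp
  ultimately show ?thesis
    using log_part by linarith
qed

text \<open>For two positive probability vectors on a finite set, the L1 distance is at most
  8 KL + 1/8 (a weak but sufficient form of Pinsker's inequality).\<close>

lemma l1_le_kl:
  fixes P Q :: "'a \<Rightarrow> real"
  assumes "finite S" "\<forall>h\<in>S. P h > 0" "\<forall>h\<in>S. Q h > 0" "sum P S = 1" "sum Q S = 1"
  shows "(\<Sum>h\<in>S. \<bar>P h - Q h\<bar>) \<le> 8 * (\<Sum>h\<in>S. P h * ln (P h / Q h)) + 1/8"
proof -
  have "16 * (\<Sum>h\<in>S. \<bar>P h - Q h\<bar>) = (\<Sum>h\<in>S. 16 * \<bar>P h - Q h\<bar>)"
    by (simp add: sum_distrib_left)
  also have "\<dots> \<le> (\<Sum>h\<in>S. 128 * (P h * ln (P h / Q h)) + 128 * Q h - 128 * P h + P h + Q h)"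
    using assms(2,3) pinsker_pointwise[of "sqrt (P _)" "sqrt (Q _)"]
    by (intro sum_mono) simp
  also have "\<dots> = 128 * (\<Sum>h\<in>S. P h * ln (P h / Q h)) + 2"
    using assms(4,5) by (simp add: sum.distrib sum_subtractf sum_distrib_left[symmetric])
  finally show ?thesis
    by simp
qed

section \<open>The hard instances\<close>

text \<open>Epoch t lies in block (t - 1) div L.  In block j the arm a j has mean 1/2 + e and
  every other arm mean 1/2.  Choosing a j outside 1..K gives a block without good arm.\<close>

definition hard_instance :: "real \<Rightarrow> nat \<Rightarrow> (nat \<Rightarrow> nat) \<Rightarrow> nat \<Rightarrow> nat \<Rightarrow> real" where
  "hard_instance e L a t k = (if k = a ((t - 1) div L) then 1/2 + e else 1/2)"

lemma hard_instance_Suc: "hard_instance e L a (Suc s) k = (if k = a (s div L) then 1/2 + e else 1/2)"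
  by (simp add: hard_instance_def)

lemma hard_instance_interior: "0 < e \<Longrightarrow> e < 1/2 \<Longrightarrow> interior_means (hard_instance e L a)"
  by (auto simp: interior_means_def hard_instance_def)

lemma hard_instance_step_variation:
  assumes "0 \<le> e" "L > 0" "K > 0" "t \<ge> 1"
  shows "Max ((\<lambda>k. \<bar>hard_instance e L a t k - hard_instance e L a (t+1) k\<bar>) ` {1..K})
           \<le> (if L dvd t then e else 0)"
proof -
  have ne: "(\<lambda>k. \<bar>hard_instance e L a t k - hard_instance e L a (t+1) k\<bar>) ` {1..K} \<noteq> {}"
    using assms by auto
  show ?thesis
  proof (cases "L dvd t")
    case True
    then show ?thesis
      using assms ne by (subst Max_le_iff) (auto simp: hard_instance_def)
  next
    case False
    then have "t div L = (t - 1) div L"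
      using assms by (cases t) (simp_all add: div_Suc dvd_eq_mod_eq_0)
    then show ?thesis
      using ne False by (subst Max_le_iff) (auto simp: hard_instance_def)
  qed
qed

lemma card_multiples_le:
  assumes "L > 0"
  shows "card {t\<in>{1..n}. L dvd t} \<le> n div L"
proof -
  have "{t\<in>{1..n}. L dvd t} \<subseteq> (\<lambda>i. i * L) ` {1..n div L}"
  proof
    fix t assume "t \<in> {t\<in>{1..n}. L dvd t}"
    then obtain c where c: "t = c * L" "1 \<le> t" "t \<le> n"
      by (auto elim!: dvdE simp: mult.commute)
    then have "c \<ge> 1"
      by (cases c) auto
    moreover have "c \<le> n div L"
      using c assms by (metis div_le_mono nonzero_mult_div_cancel_right not_gr0)
    ultimately show "t \<in> (\<lambda>i. i * L) ` {1..n div L}"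
      using c by auto
  qed
  then have "card {t\<in>{1..n}. L dvd t} \<le> card ((\<lambda>i. i * L) ` {1..n div L})"
    by (intro card_mono) auto
  also have "\<dots> \<le> card {1..n div L}"
    by (rule card_image_le) simp
  finally show ?thesis
    by simp
qed

lemma hard_instance_variation:
  assumes "0 \<le> e" "e \<le> 1/2" "L > 0" "K > 0" "e * real T / real L \<le> V"
  shows "in_variation_set K T V (hard_instance e L a)"
  unfolding in_variation_set_def
proof
  show "\<forall>t\<in>{1..T}. \<forall>k\<in>{1..K}. 0 \<le> hard_instance e L a t k \<and> hard_instance e L a t k \<le> 1"
    using assms by (auto simp: hard_instance_def)
  have "(\<Sum>t=1..T-1. Max ((\<lambda>k. \<bar>hard_instance e L a t k - hard_instance e L a (t+1) k\<bar>) ` {1..K}))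
        \<le> (\<Sum>t=1..T-1. if L dvd t then e else 0)"
    using assms by (intro sum_mono hard_instance_step_variation) auto
  also have "\<dots> = e * real (card {t\<in>{1..T-1}. L dvd t})"
  proof -
    have "{t\<in>{1..T-1}. L dvd t} = {1..T-1} \<inter> {t. L dvd t}"
      by auto
    then show ?thesis
      by (simp add: sum.If_cases)
  qed
  also have "\<dots> \<le> e * real ((T - 1) div L)"
    using card_multiples_le[OF assms(3)] assms by (intro mult_left_mono) auto
  also have "\<dots> \<le> e * (real T / real L)"
  proof -
    have "real ((T - 1) div L) * real L \<le> real (T - 1)"
      by (metis div_times_less_eq_dividend of_nat_le_iff of_nat_mult)
    then have "real ((T - 1) div L) \<le> real T / real L"
      using assms by (simp add: pos_le_divide_eq)
    then show ?thesis
      using assms by (intro mult_left_mono) auto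
  qed
  finally show "(\<Sum>t=1..T-1. Max ((\<lambda>k. \<bar>hard_instance e L a t k - hard_instance e L a (t+1) k\<bar>) ` {1..K})) \<le> V"
    using assms by simp
qed

lemma best_mean_hard_instance:
  assumes "a (t div L) \<in> {1..K}" "0 \<le> e"
  shows "best_mean K (hard_instance e L a) (Suc t) = 1/2 + e"
  unfolding best_mean_def
proof (rule Max_eqI)
  show "finite ((\<lambda>k. hard_instance e L a (Suc t) k) ` {1..K})"
    by simp
  show "\<And>y. y \<in> (\<lambda>k. hard_instance e L a (Suc t) k) ` {1..K} \<Longrightarrow> y \<le> 1/2 + e"
    using assms by (auto simp: hard_instance_Suc)
  show "1/2 + e \<in> (\<lambda>k. hard_instance e L a (Suc t) k) ` {1..K}"
    using assms by (intro image_eqI[of _ _ "a (t div L)"]) (auto simp: hard_instance_Suc)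
qed

lemma sum_best_mean_hard_instance:
  assumes "\<forall>t<T. a (t div L) \<in> {1..K}" "0 \<le> e"
  shows "(\<Sum>t=1..T. best_mean K (hard_instance e L a) t) = real T * (1/2 + e)"
proof -
  have "(\<Sum>t=1..T. best_mean K (hard_instance e L a) t) = (\<Sum>t<T. best_mean K (hard_instance e L a) (Suc t))"
    using sum.atLeast1_atMost_eq[of "best_mean K (hard_instance e L a)" T] by simp
  also have "\<dots> = (\<Sum>t<T. 1/2 + e)"
    using assms best_mean_hard_instance by (intro sum.cong) auto
  finally show ?thesis
    by simp
qed

definition hit_prob :: "real \<Rightarrow> nat \<Rightarrow> (nat \<Rightarrow> nat) \<Rightarrow> (bool list \<Rightarrow> nat) \<Rightarrow> nat \<Rightarrow> real" where
  "hit_prob e L a p t =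
     (\<Sum>h\<in>{h. length h = t}. hist_prob (hard_instance e L a) p h * (if p h = a (t div L) then 1 else 0))"

lemma det_regret_hard_instance:
  assumes "\<forall>t<T. a (t div L) \<in> {1..K}" "0 \<le> e"
  shows "(\<Sum>t=1..T. best_mean K (hard_instance e L a) t) - det_exp_reward (hard_instance e L a) p T
         = e * (\<Sum>t<T. 1 - hit_prob e L a p t)"
proof -
  have reward: "(\<Sum>h\<in>{h. length h = t}. hist_prob (hard_instance e L a) p h * hard_instance e L a (t+1) (p h))
                = 1/2 + e * hit_prob e L a p t" for t
  proof -
    have "(\<Sum>h\<in>{h. length h = t}. hist_prob (hard_instance e L a) p h * hard_instance e L a (t+1) (p h)) =
          (\<Sum>h\<in>{h. length h = t}. 1/2 * hist_prob (hard_instance e L a) p h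
             + e * (hist_prob (hard_instance e L a) p h * (if p h = a (t div L) then 1 else 0)))"
      by (intro sum.cong refl) (simp add: hard_instance_Suc algebra_simps)
    also have "\<dots> = 1/2 * (\<Sum>h\<in>{h. length h = t}. hist_prob (hard_instance e L a) p h) + e * hit_prob e L a p t"
      unfolding hit_prob_def by (simp add: sum.distrib sum_distrib_left)
    finally show ?thesis
      by (simp add: hist_prob_sum_one)
  qed
  have "(\<Sum>t<T. 1/2 + e * hit_prob e L a p t) = real T / 2 + e * (\<Sum>t<T. hit_prob e L a p t)"
    by (simp add: sum.distrib sum_distrib_left)
  then show ?thesis
    unfolding sum_best_mean_hard_instance[OF assms] det_exp_reward_def reward
    by (simp add: sum_subtractf algebra_simps)
qed

section \<open>A policy cannot locate the good arm within a block\<close>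

lemma card_block_le:
  assumes "L > 0"
  shows "card {s. s < t \<and> s div L = j} \<le> L"
proof -
  have "{s. s < t \<and> s div L = j} \<subseteq> {j * L..<j * L + L}"
  proof
    fix s assume "s \<in> {s. s < t \<and> s div L = j}"
    then have "j * L + s mod L = s"
      using div_mult_mod_eq[of s L] by simp
    then show "s \<in> {j * L..<j * L + L}"
      using assms mod_less_divisor[OF assms, of s] by simp
  qed
  then show ?thesis
    using card_mono[of "{j * L..<j * L + L}"] by fastforce
qed

text \<open>Fix all good arms except the one of block j.  Relative to the reference instance
  without good arm in block j, the instance with good arm k differs only at epochs of
  block j and only when arm k is pulled there.  Summed over k, the chain rule and the
  quadratic bound on kl therefore give divergence at most 8 e^2 L in total.\<close>

lemma sum_hist_kl_over_good_arm:
  fixes K :: nat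
  assumes e: "0 < e" "e \<le> 1/4" and L: "L > 0" and p: "\<forall>h. p h \<in> {1..K}"
  shows "(\<Sum>k\<in>{1..K}. hist_kl (hard_instance e L (a(j := 0))) (hard_instance e L (a(j := k))) p t)
           \<le> 8 * e^2 * real L"
proof -
  define nu where "nu = hard_instance e L (a(j := 0))"
  define mk where "mk k = hard_instance e L (a(j := k))" for k
  have int_nu: "interior_means nu" and int_mk: "interior_means (mk k)" for k
    unfolding nu_def mk_def using e by (auto intro: hard_instance_interior)
  have one_step: "(\<Sum>k\<in>{1..K}. kl (nu (s+1) (p h)) (mk k (s+1) (p h))) \<le> (if s div L = j then 8 * e^2 else 0)"
    for s h
  proof (cases "s div L = j")
    case True
    have "p h \<noteq> 0"
      using p by (metis atLeastAtMost_iff not_one_le_zero)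
    then have "(\<Sum>k\<in>{1..K}. kl (nu (s+1) (p h)) (mk k (s+1) (p h)))
               = (\<Sum>k\<in>{1..K}. if p h = k then kl (1/2) (1/2 + e) else 0)"
      unfolding nu_def mk_def using True by (intro sum.cong refl) (simp add: hard_instance_Suc)
    also have "\<dots> = kl (1/2) (1/2 + e)"
      using p by (simp add: sum.delta)
    finally show ?thesis
      using kl_half_le[OF e] True by simp
  next
    case False
    then show ?thesis
      unfolding nu_def mk_def by (simp add: hard_instance_Suc)
  qed
  have "(\<Sum>k\<in>{1..K}. hist_kl nu (mk k) p t) =
        (\<Sum>s<t. \<Sum>h\<in>{h. length h = s}. hist_prob nu p h * (\<Sum>k\<in>{1..K}. kl (nu (s+1) (p h)) (mk k (s+1) (p h))))"
    unfolding hist_kl_chain_rule[OF int_nu int_mk]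
    by (subst sum.swap) (intro sum.cong refl, subst sum.swap, simp add: sum_distrib_left)
  also have "\<dots> \<le> (\<Sum>s<t. \<Sum>h\<in>{h. length h = s}. hist_prob nu p h * (if s div L = j then 8 * e^2 else 0))"
    using hist_prob_pos[OF int_nu] one_step by (intro sum_mono mult_left_mono) (auto intro: less_imp_le)
  also have "\<dots> = 8 * e^2 * real (card {s. s < t \<and> s div L = j})"
    by (simp add: sum_distrib_right[symmetric] hist_prob_sum_one sum.If_cases lessThan_def Collect_conj_eq[symmetric])
  also have "\<dots> \<le> 8 * e^2 * real L"
    using card_block_le[OF L] by (intro mult_left_mono) auto
  finally show ?thesis
    unfolding nu_def mk_def .
qed

text \<open>By the Pinsker-type inequality, the probability of pulling the good arm k in block j
  exceeds the reference probability of pulling k by at most 8 KL + 1/8.\<close>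

lemma hit_prob_le_reference:
  assumes e: "0 < e" "e \<le> 1/4" and j: "j = t div L"
  shows "hit_prob e L (a(j := k)) p t \<le>
           (\<Sum>h\<in>{h. length h = t}. hist_prob (hard_instance e L (a(j := 0))) p h * (if p h = k then 1 else 0))
           + 8 * hist_kl (hard_instance e L (a(j := 0))) (hard_instance e L (a(j := k))) p t + 1/8"
proof -
  define S where "S = {h::bool list. length h = t}"
  define P where "P = hist_prob (hard_instance e L (a(j := 0))) p"
  define Q where "Q = hist_prob (hard_instance e L (a(j := k))) p"
  have pos: "\<forall>h\<in>S. P h > 0" "\<forall>h\<in>S. Q h > 0"
    unfolding P_def Q_def using e by (auto intro!: hist_prob_pos hard_instance_interior)
  have "hit_prob e L (a(j := k)) p t = (\<Sum>h\<in>S. Q h * (if p h = k then 1 else 0))"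
    unfolding hit_prob_def S_def Q_def j by simp
  also have "\<dots> = (\<Sum>h\<in>S. P h * (if p h = k then 1 else 0)) + (\<Sum>h\<in>S. (Q h - P h) * (if p h = k then 1 else 0))"
    by (simp add: sum.distrib[symmetric] algebra_simps)
  also have "(\<Sum>h\<in>S. (Q h - P h) * (if p h = k then 1 else 0)) \<le> (\<Sum>h\<in>S. \<bar>P h - Q h\<bar>)"
    by (intro sum_mono) auto
  also have "\<dots> \<le> 8 * (\<Sum>h\<in>S. P h * ln (P h / Q h)) + 1/8"
    using l1_le_kl[OF _ pos] finite_histories hist_prob_sum_one unfolding S_def P_def Q_def by blast
  finally show ?thesis
    unfolding S_def P_def Q_def hist_kl_def by simp
qed

lemma sum_miss_prob_over_good_arm:
  fixes K :: nat
  assumes e: "0 < e" "e \<le> 1/4" and L: "L > 0" and K: "K \<ge> 2" and p: "\<forall>h. p h \<in> {1..K}"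
    and small: "512 * e^2 * real L \<le> real K"
  shows "(\<Sum>k\<in>{1..K}. 1 - hit_prob e L (a(t div L := k)) p t) \<ge> real K / 4"
proof -
  define j where "j = t div L"
  define P where "P = hist_prob (hard_instance e L (a(j := 0))) p"
  define D where "D k = hist_kl (hard_instance e L (a(j := 0))) (hard_instance e L (a(j := k))) p t" for k
  have ref_total: "(\<Sum>k\<in>{1..K}. \<Sum>h\<in>{h. length h = t}. P h * (if p h = k then 1 else 0)) = 1"
  proof -
    have "(\<Sum>k\<in>{1..K}. \<Sum>h\<in>{h. length h = t}. P h * (if p h = k then 1 else 0)) =
          (\<Sum>h\<in>{h. length h = t}. P h)"
      using p by (subst sum.swap) (simp add: if_distrib[of "\<lambda>x. P _ * x"] sum.delta cong: if_cong)
    then show ?thesis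
      unfolding P_def by (simp add: hist_prob_sum_one)
  qed
  have "(\<Sum>k\<in>{1..K}. hit_prob e L (a(j := k)) p t) \<le>
        (\<Sum>k\<in>{1..K}. (\<Sum>h\<in>{h. length h = t}. P h * (if p h = k then 1 else 0)) + 8 * D k + 1/8)"
    unfolding P_def D_def using hit_prob_le_reference[OF e j_def] by (intro sum_mono)
  also have "\<dots> = 1 + 8 * (\<Sum>k\<in>{1..K}. D k) + real K / 8"
    unfolding sum.distrib ref_total sum_distrib_left[symmetric] by simp
  also have "\<dots> \<le> 1 + real K / 4"
    using sum_hist_kl_over_good_arm[OF e L p, of a j t] small unfolding D_def by simp
  finally have "(\<Sum>k\<in>{1..K}. 1 - hit_prob e L (a(j := k)) p t) \<ge> real K - 1 - real K / 4"
    by (simp add: sum_subtractf)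
  then show ?thesis
    using K unfolding j_def by simp
qed

text \<open>Averaging over all assignments of good arms to the first m blocks: split an
  assignment into its value on the block of epoch t+1 and its values elsewhere.\<close>

lemma sum_miss_prob_over_instances:
  fixes K :: nat
  assumes e: "0 < e" "e \<le> 1/4" and L: "L > 0" and K: "K \<ge> 2" and p: "\<forall>h. p h \<in> {1..K}"
    and small: "512 * e^2 * real L \<le> real K" and j: "t div L < m"
  shows "(\<Sum>a\<in>PiE {..<m} (\<lambda>_. {1..K}). 1 - hit_prob e L a p t) \<ge> real (card (PiE {..<m} (\<lambda>_. {1..K}))) / 4"
proof -
  define j where "j = t div L"
  define R where "R = {..<m} - {j}"
  define F where "F = (\<lambda>_::nat. {1..K})"
  have jR: "j \<notin> R"
    unfolding R_def by simp
  have split: "PiE {..<m} F = (\<lambda>(y, g). g(j := y)) ` (F j \<times> PiE R F)"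
  proof -
    have "{..<m} = insert j R"
      unfolding R_def j_def using j by auto
    then show ?thesis
      by (simp add: PiE_insert_eq)
  qed
  have inj: "inj_on (\<lambda>(y, g). g(j := y)) (F j \<times> PiE R F)"
  proof (rule inj_onI, clarify)
    fix y g y' g' assume *: "g \<in> PiE R F" "g' \<in> PiE R F" "g(j := y) = g'(j := y')"
    then have "g x = g' x" for x
      using jR by (cases "x = j") (auto simp: PiE_def extensional_def dest: fun_cong[of _ _ x])
    then show "y = y' \<and> g = g'"
      using *(3) by (metis fun_upd_same ext)
  qed
  have "(\<Sum>a\<in>PiE {..<m} F. 1 - hit_prob e L a p t) = (\<Sum>g\<in>PiE R F. \<Sum>y\<in>F j. 1 - hit_prob e L (g(j := y)) p t)"
    unfolding split sum.reindex[OF inj]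
    by (subst sum.swap) (simp add: sum.cartesian_product case_prod_unfold)
  also have "\<dots> \<ge> (\<Sum>g\<in>PiE R F. real K / 4)"
    unfolding F_def j_def using sum_miss_prob_over_good_arm[OF e L K p small] by (intro sum_mono) auto
  finally have "(\<Sum>a\<in>PiE {..<m} F. 1 - hit_prob e L a p t) \<ge> real (card (PiE R F)) * real K / 4"
    by simp
  moreover have "card (PiE {..<m} F) = K * card (PiE R F)"
    unfolding split card_image[OF inj] by (simp add: card_cartesian_product F_def)
  ultimately show ?thesis
    unfolding F_def by (simp add: mult.commute)
qed

section \<open>From deterministic to randomized policies\<close>

lemma det_exp_reward_nonneg:
  assumes "in_variation_set K T V mu" "\<forall>h. p h \<in> {1..K}"
  shows "0 \<le> det_exp_reward mu p T"
  unfolding det_exp_reward_def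
proof (intro sum_nonneg mult_nonneg_nonneg)
  fix t h assume t: "t \<in> {..<T}" and "h \<in> {h::bool list. length h = t}"
  have "\<forall>s<t. \<forall>k\<in>{1..K}. 0 \<le> mu (s+1) k \<and> mu (s+1) k \<le> 1"
    using assms(1) t unfolding in_variation_set_def by auto
  then show "0 \<le> hist_prob mu p h"
    using \<open>h \<in> _\<close> assms(2) unfolding hist_prob_def by (intro prod_nonneg) auto
  show "0 \<le> mu (t+1) (p h)"
    using assms t unfolding in_variation_set_def by auto
qed

lemma sum_best_mean_le:
  assumes "in_variation_set K T V mu" "K > 0"
  shows "(\<Sum>t=1..T. best_mean K mu t) \<le> real T"
proof -
  have "best_mean K mu t \<le> 1" if "t \<in> {1..T}" for t
    using assms that unfolding best_mean_def in_variation_set_def by (subst Max_le_iff) auto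
  then show ?thesis
    using sum_mono[of "{1..T}" "best_mean K mu" "\<lambda>_. 1"] by simp
qed

text \<open>The regret dominates the loss on every admissible mean matrix; the supremum is over
  a set bounded above by T because expected rewards are nonnegative.\<close>

lemma regret_ge_instance:
  assumes adm: "admissible K M pol" and K: "K > 0" and mu: "in_variation_set K T V mu"
  shows "(\<Sum>t=1..T. best_mean K mu t) - exp_reward M pol mu T \<le> regret K T V M pol"
proof -
  interpret prob_space M
    using adm unfolding admissible_def by simp
  have pol: "\<forall>h. pol u h \<in> {1..K}" for u
    using adm unfolding admissible_def by simp
  define f where "f mu = (\<Sum>t=1..T. best_mean K mu t) - exp_reward M pol mu T" for mu
  have "bdd_above (f ` {mu. in_variation_set K T V mu})"
  proof (rule bdd_aboveI2)
    fix nu assume "nu \<in> {mu. in_variation_set K T V mu}"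
    then have nu: "in_variation_set K T V nu"
      by simp
    have "0 \<le> exp_reward M pol nu T"
      unfolding exp_reward_def using det_exp_reward_nonneg[OF nu pol] by (intro integral_nonneg_AE) auto
    then show "f nu \<le> real T"
      unfolding f_def using sum_best_mean_le[OF nu K] by simp
  qed
  then show ?thesis
    unfolding regret_def f_def[symmetric] using mu by (intro cSUP_upper) auto
qed

text \<open>Averaging argument: if, for every deterministic policy, the regret summed over a finite
  family of admissible instances is at least c per instance, then every randomized policy
  has regret at least c.  (The hypothesis on the best means covers the degenerate case in
  which some expected reward is not integrable and the integral is 0 by convention.)\<close>

lemma regret_ge_average:
  fixes K T :: nat and V :: real
  assumes adm: "admissible K M pol" and K: "K > 0"
    and fA: "finite A" and neA: "A \<noteq> {}"
    and var: "\<forall>a\<in>A. in_variation_set K T V (mus a)"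
    and det: "\<And>p. \<forall>h. p h \<in> {1..K} \<Longrightarrow>
       real (card A) * c \<le> (\<Sum>a\<in>A. (\<Sum>t=1..T. best_mean K (mus a) t) - det_exp_reward (mus a) p T)"
    and best: "\<forall>a\<in>A. c \<le> (\<Sum>t=1..T. best_mean K (mus a) t)"
  shows "c \<le> regret K T V M pol"
proof -
  interpret prob_space M
    using adm unfolding admissible_def by simp
  have pol: "\<forall>h. pol u h \<in> {1..K}" for u
    using adm unfolding admissible_def by simp
  define f where "f mu = (\<Sum>t=1..T. best_mean K mu t) - exp_reward M pol mu T" for mu
  have le: "f (mus a) \<le> regret K T V M pol" if "a \<in> A" for a
    unfolding f_def using regret_ge_instance[OF adm K] var that by blast
  show ?thesis
  proof (cases "\<forall>a\<in>A. integrable M (\<lambda>u. det_exp_reward (mus a) (pol u) T)")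
    case False
    then obtain a where a: "a \<in> A" "\<not> integrable M (\<lambda>u. det_exp_reward (mus a) (pol u) T)"
      by blast
    then have "f (mus a) = (\<Sum>t=1..T. best_mean K (mus a) t)"
      unfolding f_def exp_reward_def by (simp add: not_integrable_integral_eq)
    then show ?thesis
      using le[OF a(1)] best a(1) by fastforce
  next
    case True
    define B where "B = (\<Sum>a\<in>A. \<Sum>t=1..T. best_mean K (mus a) t)"
    have "(\<Sum>a\<in>A. exp_reward M pol (mus a) T) = (\<integral>u. (\<Sum>a\<in>A. det_exp_reward (mus a) (pol u) T) \<partial>M)"
      unfolding exp_reward_def using True by (intro Bochner_Integration.integral_sum[symmetric]) auto
    also have "\<dots> \<le> (\<integral>u. B - real (card A) * c \<partial>M)"
    proof (rule integral_mono)
      show "integrable M (\<lambda>u. \<Sum>a\<in>A. det_exp_reward (mus a) (pol u) T)"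
        using True by auto
      fix u
      show "(\<Sum>a\<in>A. det_exp_reward (mus a) (pol u) T) \<le> B - real (card A) * c"
        using det[OF pol[of u]] unfolding B_def by (simp add: sum_subtractf)
    qed simp
    also have "\<dots> = B - real (card A) * c"
      by (simp add: prob_space)
    finally have "real (card A) * c \<le> (\<Sum>a\<in>A. f (mus a))"
      unfolding f_def B_def by (simp add: sum_subtractf)
    also have "\<dots> \<le> real (card A) * regret K T V M pol"
      using le sum_mono[of A "\<lambda>a. f (mus a)" "\<lambda>_. regret K T V M pol"] by simp
    finally show ?thesis
      using fA neA by (simp add: card_gt_0_iff)
  qed
qed

lemma regret_ge_hard_instances:
  fixes K T L :: nat
  assumes adm: "admissible K M pol" and K: "K \<ge> 2" and e: "0 < e" "e \<le> 1/4" and L: "L > 0"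
    and small: "512 * e^2 * real L \<le> real K" and var: "e * real T / real L \<le> V"
  shows "e * real T / 4 \<le> regret K T V M pol"
proof -
  define m where "m = T div L + 1"
  define A where "A = PiE {..<m} (\<lambda>_. {1..K})"
  have fA: "finite A"
    unfolding A_def by (intro finite_PiE) auto
  have neA: "A \<noteq> {}"
    unfolding A_def using K by (simp add: PiE_eq_empty_iff)
  have block_lt: "t div L < m" if "t < T" for t
    unfolding m_def using div_le_mono[of t T L] that by simp
  have good_arm: "\<forall>t<T. a (t div L) \<in> {1..K}" if "a \<in> A" for a
    using that block_lt unfolding A_def by (auto simp: PiE_def Pi_def)
  show ?thesis
  proof (rule regret_ge_average[OF adm _ fA neA, where mus = "hard_instance e L"])
    show "\<forall>a\<in>A. in_variation_set K T V (hard_instance e L a)"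
      using e L K var by (intro ballI hard_instance_variation) auto
    show "\<forall>a\<in>A. e * real T / 4 \<le> (\<Sum>t=1..T. best_mean K (hard_instance e L a) t)"
      using good_arm e sum_best_mean_hard_instance by (simp add: algebra_simps)
    fix p :: "bool list \<Rightarrow> nat" assume p: "\<forall>h. p h \<in> {1..K}"
    have "real (card A) * (e * real T / 4) = e * (\<Sum>t<T. real (card A) / 4)"
      by simp
    also have "\<dots> \<le> e * (\<Sum>t<T. \<Sum>a\<in>A. 1 - hit_prob e L a p t)"
      unfolding A_def using e sum_miss_prob_over_instances[OF e L K p small block_lt]
      by (intro mult_left_mono sum_mono) auto
    also have "\<dots> = (\<Sum>a\<in>A. e * (\<Sum>t<T. 1 - hit_prob e L a p t))"
      by (simp add: sum_distrib_left sum.swap[of _ A])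
    also have "\<dots> = (\<Sum>a\<in>A. (\<Sum>t=1..T. best_mean K (hard_instance e L a) t) - det_exp_reward (hard_instance e L a) p T)"
      using good_arm e by (intro sum.cong refl det_regret_hard_instance[symmetric]) auto
    finally show "real (card A) * (e * real T / 4) \<le> \<dots>" .
  qed (use K in simp)
qed

lemma powr_third_split:
  fixes x T :: real
  assumes "T > 0"
  shows "x powr (1/3) * T powr (2/3) = (x / T) powr (1/3) * T"
proof -
  have "T powr (1/3) * T powr (2/3) = T"
    using assms by (simp add: powr_add[symmetric])
  then show ?thesis
    using assms by (simp add: powr_divide field_simps)
qed

text \<open>The choice e = s / 32 and L = \<lceil>K / s^2\<rceil> with s = (K V / T)^(1/3) \<le> 1 satisfies
  both constraints of the previous lemma and makes e T / 4 the claimed rate.\<close>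

lemma parameter_choice:
  fixes T K :: nat and V :: real
  assumes T: "T \<ge> 1" and K: "K \<ge> 2" and V: "1 / real K \<le> V" "V \<le> real T / real K"
  obtains e :: real and L :: nat
  where "0 < e" "e \<le> 1/4" "L > 0" "512 * e^2 * real L \<le> real K" "e * real T / real L \<le> V"
    and "e * real T / 4 = 1/128 * (real K * V) powr (1/3) * real T powr (2/3)"
proof -
  have Kp: "real K > 0" and Tp: "real T > 0"
    using K T by auto
  have Vp: "V > 0"
    using V(1) Kp by (smt (verit) divide_pos_pos)
  define s where "s = (real K * V / real T) powr (1/3)"
  have sp: "s > 0"
    unfolding s_def using Kp Tp Vp by simp
  have "real K * V / real T \<le> 1"
    using V(2) Kp Tp by (simp add: field_simps)
  then have s1: "s \<le> 1"
    unfolding s_def using Kp Tp Vp by (intro powr_le1) auto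
  have s3: "s^3 = real K * V / real T"
    unfolding s_def using Kp Tp Vp by (simp add: powr_power)
  define y where "y = real K / s^2"
  have yK: "y \<ge> real K"
    unfolding y_def using s1 sp Kp by (simp add: le_divide_eq power_le_one)
  define L where "L = nat \<lceil>y\<rceil>"
  have L_ge: "real L \<ge> y" and L_le: "real L \<le> 2 * y" and L_pos: "L > 0"
    unfolding L_def using yK K by linarith+
  define e where "e = s / 32"
  show ?thesis
  proof
    show "0 < e" "e \<le> 1/4"
      unfolding e_def using sp s1 by auto
    show "L > 0"
      by (fact L_pos)
    have "512 * e^2 * real L = s^2 / 2 * real L"
      unfolding e_def by (simp add: power2_eq_square)
    also have "\<dots> \<le> s^2 / 2 * (2 * y)"
      using L_le by (intro mult_left_mono) auto
    also have "\<dots> = real K"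
      unfolding y_def using sp by simp
    finally show "512 * e^2 * real L \<le> real K" .
    have "e * real T / real L \<le> e * real T / y"
      using L_ge sp Tp yK Kp unfolding e_def by (intro divide_left_mono) auto
    also have "\<dots> = s^3 * real T / (32 * real K)"
      unfolding y_def e_def using sp Kp by (simp add: power3_eq_cube power2_eq_square field_simps)
    also have "\<dots> = V / 32"
      unfolding s3 using Kp Tp by (simp add: field_simps)
    finally show "e * real T / real L \<le> V"
      using Vp by linarith
    show "e * real T / 4 = 1/128 * (real K * V) powr (1/3) * real T powr (2/3)"
      unfolding e_def s_def using powr_third_split[OF Tp, of "real K * V"] by simp
  qed
qed

theorem theorem1:
  shows "\<exists>C>0. \<forall>(T::nat) (K::nat) (V::real) (M::real measure) (pol::real \<Rightarrow> bool list \<Rightarrow> nat).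
           T \<ge> 1 \<longrightarrow> K \<ge> 2 \<longrightarrow> 1 / real K \<le> V \<longrightarrow> V \<le> real T / real K \<longrightarrow>
           admissible K M pol \<longrightarrow>
           regret K T V M pol \<ge> C * (real K * V) powr (1/3) * real T powr (2/3)"
proof (intro exI[of _ "1/128"] conjI allI impI)
  fix T K :: nat and V :: real and M :: "real measure" and pol :: "real \<Rightarrow> bool list \<Rightarrow> nat"
  assume T: "T \<ge> 1" and K: "K \<ge> 2" and V: "1 / real K \<le> V" "V \<le> real T / real K"
    and adm: "admissible K M pol"
  obtain e :: real and L :: nat
    where "0 < e" "e \<le> 1/4" "L > 0" "512 * e^2 * real L \<le> real K" "e * real T / real L \<le> V"
      and rate: "e * real T / 4 = 1/128 * (real K * V) powr (1/3) * real T powr (2/3)"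
    by (rule parameter_choice[OF T K V])
  then have "e * real T / 4 \<le> regret K T V M pol"
    using regret_ge_hard_instances[OF adm K] by blast
  then show "regret K T V M pol \<ge> 1/128 * (real K * V) powr (1/3) * real T powr (2/3)"
    using rate by simp
qed simp

end
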